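(* Let $p$ be a prime and $G$ a $p$-group of order $p^m$ with $|G/Z(G)|=p^2$. Then $$A_G(t)=\frac{1}{p^m}\left(\frac{p^{m-2}}{1-p^mt}+\frac{p^m-p^{m-2}}{1-p^{m-1}t}\right).$$
   Context: For a finite group $G$ and $n\ge0$, let $\alpha_{G,n}$ be the number of orbits of $G$ acting on $G^n$ by simultaneous conjugation $g\cdot(x_1,\dots,x_n)=(gx_1g^{-1},\dots,gx_ng^{-1})$, and $A_G(t)=\sum_{n\ge0}\alpha_{G,n}t^n$, viewed as a rational function of $t$. *)

theory Defs
  imports "HOL-Algebra.Algebra" "HOL-Library.FuncSet"
    "HOL-Computational_Algebra.Formal_Power_Series"
begin

definition group_center :: "('a, 'b) monoid_scheme \<Rightarrow> 'a set" where
  "group_center G = {z \<in> carrier G. \<forall>g \<in> carrier G. z \<otimes>\<^bsub>G\<^esub> g = g \<otimes>\<^bsub>G\<^esub> z}"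

definition tuple_conj :: "('a, 'b) monoid_scheme \<Rightarrow> nat \<Rightarrow> 'a \<Rightarrow> (nat \<Rightarrow> 'a) \<Rightarrow> (nat \<Rightarrow> 'a)" where
  "tuple_conj G n g x = restrict (\<lambda>i. g \<otimes>\<^bsub>G\<^esub> x i \<otimes>\<^bsub>G\<^esub> inv\<^bsub>G\<^esub> g) {..<n}"

definition conj_orbit_count :: "('a, 'b) monoid_scheme \<Rightarrow> nat \<Rightarrow> nat" where
  "conj_orbit_count G n =
     card ((\<lambda>x. (\<lambda>g. tuple_conj G n g x) ` carrier G) ` ({..<n} \<rightarrow>\<^sub>E carrier G))"

definition conj_orbit_series :: "('a, 'b) monoid_scheme \<Rightarrow> real fps" where
  "conj_orbit_series G = Abs_fps (\<lambda>n. of_nat (conj_orbit_count G n))"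

end

(* By Burnside's lemma, alpha_n |G| is the sum over g of |C_G(g)|^n.  Central elements have
   C_G(g) = G.  For a non-central g we have Z(G) < C_G(g) < G, so the index
   [G : Z(G)] = p^2 = [G : C_G(g)] [C_G(g) : Z(G)] splits into two nontrivial factors, both
   equal to p; hence |C_G(g)| = |G|/p.  Thus alpha_n |G| = |Z| |G|^n + (|G| - |Z|) (|G|/p)^n,
   which is the n-th coefficient of the stated rational function since |Z| = p^(m-2). *)

theory Submission
  imports Defs "HOL-Computational_Algebra.Primes"
begin

lemma fps_inverse_one_minus_const_X:
  "inverse (1 - fps_const (c::'a::field) * fps_X) = Abs_fps (\<lambda>n. c ^ n)"
proof (rule fps_inverse_unique)
  let ?A = "Abs_fps (\<lambda>n. c ^ n)"
  have "(1 - fps_const c * fps_X) * ?A = ?A - fps_const c * (fps_X * ?A)"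
    by (simp add: left_diff_distrib mult.assoc)
  also have "\<dots> = 1"
    by (rule fps_ext) (auto simp: gr0_conv_Suc split: nat.split)
  finally show "(1 - fps_const c * fps_X) * ?A = 1" .
qed

lemma prime_square_eq_mult_nontrivial:
  fixes p a b :: nat
  assumes "Factorial_Ring.prime p" "a * b = p ^ 2" "a \<noteq> 1" "b \<noteq> 1"
  shows "b = p"
proof -
  have "b dvd p ^ 2" using assms(2) by (metis dvd_triv_right)
  then obtain i where "i \<le> 2" "b = p ^ i"
    using divides_primepow_nat[OF assms(1)] by blast
  moreover have "p > 0" using assms(1) prime_gt_0_nat by blast
  moreover have "i = 0 \<or> i = 1 \<or> i = 2" using \<open>i \<le> 2\<close> by auto
  ultimately show ?thesis using assms by auto
qed

lemma power_mult_eq_powerD: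
  fixes p :: nat
  assumes "1 < p" "p ^ k * z = p ^ m"
  shows "k \<le> m" "z = p ^ (m - k)"
proof -
  have "z > 0" using assms by (cases z) auto
  then have "p ^ k * 1 \<le> p ^ k * z" by (intro mult_le_mono2) simp
  then have "p ^ k \<le> p ^ m" using assms(2) by simp
  then show "k \<le> m" using assms(1) by simp
  then have "p ^ m = p ^ k * p ^ (m - k)" by (simp flip: power_add)
  then show "z = p ^ (m - k)" using assms by simp
qed

definition centralizer :: "('a, 'b) monoid_scheme \<Rightarrow> 'a \<Rightarrow> 'a set" where
  "centralizer G g = {x \<in> carrier G. x \<otimes>\<^bsub>G\<^esub> g = g \<otimes>\<^bsub>G\<^esub> x}"

context group
begin

lemma conj_eq_self_iff:
  assumes "g \<in> carrier G" "x \<in> carrier G"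
  shows "g \<otimes> x \<otimes> inv g = x \<longleftrightarrow> g \<otimes> x = x \<otimes> g"
  using assms by (metis inv_solve_right m_closed inv_closed)

lemma centralizer_eq_stabilizer:
  assumes "g \<in> carrier G"
  shows "centralizer G g = stabilizer G (\<lambda>x. \<lambda>h \<in> carrier G. x \<otimes> h \<otimes> inv x) g"
  unfolding centralizer_def stabilizer_def using assms conj_eq_self_iff by auto

lemma subgroup_centralizer: "g \<in> carrier G \<Longrightarrow> subgroup (centralizer G g) G"
  using group_action.stabilizer_subgroup[OF action_by_conjugation]
  by (simp add: centralizer_eq_stabilizer)

lemma group_center_eq_Inter_centralizer:
  "group_center G = (\<Inter>g \<in> carrier G. centralizer G g)"
  using one_closed by (auto simp: group_center_def centralizer_def)

lemma subgroup_group_center: "subgroup (group_center G) G"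
  unfolding group_center_eq_Inter_centralizer
  by (rule subgroups_Inter) (auto simp: subgroup_centralizer)

lemma centralizer_central: "z \<in> group_center G \<Longrightarrow> centralizer G z = carrier G"
  by (auto simp: group_center_def centralizer_def)

lemma tuple_conj_closed:
  assumes "g \<in> carrier G" "x \<in> {..<n} \<rightarrow>\<^sub>E carrier G"
  shows "tuple_conj G n g x \<in> {..<n} \<rightarrow>\<^sub>E carrier G"
  using assms by (auto simp: tuple_conj_def)

lemma tuple_conj_mult:
  assumes "g \<in> carrier G" "h \<in> carrier G" "x \<in> {..<n} \<rightarrow>\<^sub>E carrier G"
  shows "tuple_conj G n g (tuple_conj G n h x) = tuple_conj G n (g \<otimes> h) x"
  using assms by (auto simp: tuple_conj_def inv_mult_group m_assoc PiE_iff)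

lemma tuple_conj_one:
  "x \<in> {..<n} \<rightarrow>\<^sub>E carrier G \<Longrightarrow> tuple_conj G n \<one> x = x"
  by (auto simp: tuple_conj_def PiE_iff extensional_def)

lemma tuple_conj_eq_self_iff:
  assumes "g \<in> carrier G" "x \<in> {..<n} \<rightarrow>\<^sub>E carrier G"
  shows "tuple_conj G n g x = x \<longleftrightarrow> x \<in> {..<n} \<rightarrow>\<^sub>E centralizer G g"
  using assms conj_eq_self_iff
  by (auto simp: tuple_conj_def centralizer_def PiE_iff extensional_def fun_eq_iff)

lemma group_action_tuple_conj:
  "group_action G ({..<n} \<rightarrow>\<^sub>E carrier G)
     (\<lambda>g. restrict (tuple_conj G n g) ({..<n} \<rightarrow>\<^sub>E carrier G))"
    (is "group_action G ?X ?\<phi>")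
proof -
  have "?\<phi> g \<in> Bij ?X" if "g \<in> carrier G" for g
  proof -
    have "bij_betw (?\<phi> g) ?X ?X"
      by (rule bij_betw_byWitness[where f' = "?\<phi> (inv g)"])
        (use that tuple_conj_closed in \<open>simp_all add: tuple_conj_mult tuple_conj_one image_subset_iff\<close>)
    then show ?thesis by (simp add: Bij_def)
  qed
  moreover have "?\<phi> (g \<otimes> h) = compose ?X (?\<phi> g) (?\<phi> h)"
    if "g \<in> carrier G" "h \<in> carrier G" for g h
    by (rule ext) (simp add: compose_def tuple_conj_closed tuple_conj_mult that)
  ultimately have "?\<phi> \<in> hom G (BijGroup ?X)"
    by (simp add: hom_def BijGroup_def)
  then show ?thesis
    by (simp add: group_action_def group_hom_def group_hom_axioms_def group_BijGroup is_group)
qed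

lemma conj_orbit_count_mult_order:
  assumes "finite (carrier G)"
  shows "conj_orbit_count G n * order G = (\<Sum>g \<in> carrier G. card (centralizer G g) ^ n)"
proof -
  let ?X = "{..<n} \<rightarrow>\<^sub>E carrier G"
  let ?\<phi> = "\<lambda>g. restrict (tuple_conj G n g) ?X"
  interpret group_action G ?X ?\<phi> by (rule group_action_tuple_conj)
  have "orbits G ?X ?\<phi> = (\<lambda>x. (\<lambda>g. tuple_conj G n g x) ` carrier G) ` ?X"
    by (auto simp: orbits_def orbit_def)
  moreover have "invariants ?X ?\<phi> g = {..<n} \<rightarrow>\<^sub>E centralizer G g" if "g \<in> carrier G" for g
  proof -
    have "{..<n} \<rightarrow>\<^sub>E centralizer G g \<subseteq> ?X"
      by (rule PiE_mono) (auto simp: centralizer_def)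
    then show ?thesis
      using tuple_conj_eq_self_iff[OF that] by (auto simp: invariants_def)
  qed
  ultimately show ?thesis
    using burnside[OF assms] assms
    by (simp add: conj_orbit_count_def finite_PiE card_PiE)
qed

lemma order_FactGroup_center_mult_card:
  "order (G Mod group_center G) * card (group_center G) = order G"
  using lagrange[OF subgroup_group_center] by (simp add: FactGroup_def order_def)

lemma card_centralizer_noncentral:
  assumes p: "Factorial_Ring.prime p" and fin: "finite (carrier G)"
    and index: "order (G Mod group_center G) = p ^ 2"
    and g: "g \<in> carrier G - group_center G"
  shows "p * card (centralizer G g) = order G"
proof -
  let ?Z = "group_center G" and ?C = "centralizer G g"
  have C: "subgroup ?C G" using g by (simp add: subgroup_centralizer)
  have "?Z \<subseteq> ?C" using g by (auto simp: group_center_def centralizer_def)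
  with subgroup_group_center C have Z_in_C: "subgroup ?Z (G\<lparr>carrier := ?C\<rparr>)"
    by (rule subgroup_incl)
  define a where "a = card (rcosets\<^bsub>G\<lparr>carrier := ?C\<rparr>\<^esub> ?Z)"
  define b where "b = card (rcosets ?C)"
  have C_eq: "a * card ?Z = card ?C"
    using group.lagrange[OF subgroup_imp_group[OF C] Z_in_C]
    by (simp add: a_def order_def)
  have G_eq: "b * card ?C = order G" unfolding b_def by (rule lagrange[OF C])
  have "finite ?Z" "\<one> \<in> ?Z"
    using fin subgroup.subset[OF subgroup_group_center] finite_subset
    by (auto simp: group_center_def)
  then have "card ?Z > 0" by (auto simp: card_gt_0_iff)
  have "a * b * card ?Z = card ?C * b"
    using C_eq by (metis mult.commute mult.assoc)
  also have "\<dots> = p ^ 2 * card ?Z"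
    using G_eq order_FactGroup_center_mult_card index by (simp add: mult.commute)
  finally have ab: "a * b = p ^ 2" using \<open>card ?Z > 0\<close> by simp
  have "finite ?C" using fin by (simp add: centralizer_def)
  moreover have "?Z \<subset> ?C" using \<open>?Z \<subseteq> ?C\<close> g by (auto simp: centralizer_def)
  ultimately have "card ?Z < card ?C" by (rule psubset_card_mono)
  then have "a \<noteq> 1" using C_eq by auto
  obtain h where "h \<in> carrier G" "g \<otimes> h \<noteq> h \<otimes> g"
    using g by (auto simp: group_center_def)
  then have "h \<in> carrier G - ?C" by (auto simp: centralizer_def)
  then have "?C \<subset> carrier G" unfolding centralizer_def by blast
  with fin have "card ?C < order G" unfolding order_def by (rule psubset_card_mono)
  then have "b \<noteq> 1" using G_eq by auto
  have "b = p" by (rule prime_square_eq_mult_nontrivial) fact+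
  then show ?thesis using G_eq by simp
qed

lemma conj_orbit_count_center_index_prime_square:
  assumes p: "Factorial_Ring.prime p" and fin: "finite (carrier G)"
    and index: "order (G Mod group_center G) = p ^ 2"
  defines "N \<equiv> real (order G)" and "z \<equiv> real (card (group_center G))"
  shows "real (conj_orbit_count G n) * N = z * N ^ n + (N - z) * (N / p) ^ n"
proof -
  let ?Z = "group_center G" and ?c = "\<lambda>g. real (card (centralizer G g)) ^ n"
  have Z: "?Z \<subseteq> carrier G" by (rule subgroup.subset[OF subgroup_group_center])
  have "p > 0" using p prime_gt_0_nat by blast
  have "real (conj_orbit_count G n) * N = real (conj_orbit_count G n * order G)"
    by (simp add: N_def)
  also have "\<dots> = (\<Sum>g \<in> carrier G. ?c g)"
    by (simp add: conj_orbit_count_mult_order[OF fin])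
  also have "\<dots> = (\<Sum>g \<in> ?Z. ?c g) + (\<Sum>g \<in> carrier G - ?Z. ?c g)"
    using sum.subset_diff[OF Z fin, of ?c] by simp
  also have "\<dots> = (\<Sum>g \<in> ?Z. N ^ n) + (\<Sum>g \<in> carrier G - ?Z. (N / p) ^ n)"
  proof -
    have "real (card (centralizer G g)) = N / p" if "g \<in> carrier G - ?Z" for g
    proof -
      have "real p * real (card (centralizer G g)) = N"
        using card_centralizer_noncentral[OF p fin index that] unfolding N_def
        by (metis of_nat_mult)
      then show ?thesis using \<open>p > 0\<close> by (simp add: field_simps)
    qed
    then show ?thesis
      by (simp add: centralizer_central N_def order_def)
  qed
  also have "\<dots> = z * N ^ n + (N - z) * (N / p) ^ n"
    using Z fin by (simp add: z_def N_def order_def card_Diff_subset finite_subset of_nat_diff card_mono)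
  finally show ?thesis .
qed

lemma conj_orbit_series_center_index_prime_square:
  assumes p: "Factorial_Ring.prime p" and fin: "finite (carrier G)"
    and index: "order (G Mod group_center G) = p ^ 2"
  defines "N \<equiv> real (order G)" and "z \<equiv> real (card (group_center G))"
  shows "conj_orbit_series G =
    fps_const (1 / N) * (fps_const z * inverse (1 - fps_const N * fps_X)
      + fps_const (N - z) * inverse (1 - fps_const (N / p) * fps_X))"
proof (rule fps_ext)
  fix n
  have "N > 0" using fin unfolding N_def by (simp add: order_gt_0_iff_finite)
  then have "real (conj_orbit_count G n) = 1 / N * (z * N ^ n + (N - z) * (N / p) ^ n)"
    using conj_orbit_count_center_index_prime_square[OF p fin index, of n]
    unfolding N_def z_def by (simp add: field_simps)
  then show "fps_nth (conj_orbit_series G) n =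
    fps_nth (fps_const (1 / N) * (fps_const z * inverse (1 - fps_const N * fps_X)
      + fps_const (N - z) * inverse (1 - fps_const (N / p) * fps_X))) n"
    by (simp add: conj_orbit_series_def fps_inverse_one_minus_const_X)
qed

end

theorem lemma7p1:
  fixes G :: "('a, 'b) monoid_scheme" and p m :: nat
  assumes "Factorial_Ring.prime p" and "group G" and "finite (carrier G)"
    and "order G = p ^ m"
    and "order (G Mod (group_center G)) = p ^ 2"
  shows "conj_orbit_series G =
    fps_const (1 / real p ^ m) *
      (fps_const (real p ^ (m - 2)) * inverse (1 - fps_const (real p ^ m) * fps_X)
       + fps_const (real p ^ m - real p ^ (m - 2)) * inverse (1 - fps_const (real p ^ (m - 1)) * fps_X))"
proof -
  interpret group G by fact
  have "1 < p" using assms(1) prime_gt_1_nat by blast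
  have "p ^ 2 * card (group_center G) = p ^ m"
    using order_FactGroup_center_mult_card assms(4,5) by simp
  with \<open>1 < p\<close> have "2 \<le> m" "card (group_center G) = p ^ (m - 2)"
    by (rule power_mult_eq_powerD)+
  moreover have "real p ^ m / real p = real p ^ (m - 1)"
    using \<open>1 < p\<close> \<open>2 \<le> m\<close> power_diff[of "real p" 1 m] by simp
  ultimately show ?thesis
    using conj_orbit_series_center_index_prime_square[OF assms(1,3,5)] assms(4) by simp
qed

end
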